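(* Let $\mathcal{G}\subseteq C(\mathbb{R},\mathbb{R})$ be nonempty. The following conditions are equivalent: (1) $\mathcal{K}_\mathcal{G}=\{\mathrm{CL}(\mathbb{R})\cap\mathcal{P}(X):X\subseteq\mathbb{R}\}$; (2) $\mathcal{G}$ is a complete and connected family, and for every $x\in\mathbb{R}$ there exists $f\in C(\mathbb{R},\mathbb{R})$ such that $f\setminus\bigcup\mathcal{G}=f\restriction\{x\}$ (i.e., $(x,f(x))$ is the only point of the graph of $f$ not in $\bigcup\mathcal{G}$).
   Context: Functions are identified with their graphs, so $\bigcup\mathcal{G}\subseteq\mathbb{R}^2$ is the union of graphs. $\mathrm{CL}(\mathbb{R})$ is the family of closed subsets of $\mathbb{R}$ and $\mathcal{P}(X)$ the power set of $X$. A family $\mathcal{G}\subseteq C(\mathbb{R},\mathbb{R})$ is complete if $g\in\mathcal{G}$ for every $g\in C(\mathbb{R},\mathbb{R})$ whose graph is contained in $\bigcup\mathcal{G}$; it is connected if for any $f,g\in\mathcal{G}$ and $x\neq y$ there is $h\in\mathcal{G}$ with $h(x)=f(x)$ and $h(y)=g(y)$. For $\mathcal{G}\subseteq C(\mathbb{R},\mathbb{R})$ let $R_\mathcal{G}=\{(f,E)\in C(\mathbb{R},\mathbb{R})\times\mathrm{CL}(\mathbb{R}):(\exists g\in\mathcal{G})\, f\restriction E=g\restriction E\}$; for $\mathcal{F}\subseteq C(\mathbb{R},\mathbb{R})$ put $E_\mathcal{G}(\mathcal{F})=\{E\in\mathrm{CL}(\mathbb{R}):(\forall f\in\mathcal{F})\,(f,E)\in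 R_\mathcal{G}\}$, and let $\mathcal{K}_\mathcal{G}=\{E_\mathcal{G}(\mathcal{F}):\mathcal{F}\subseteq C(\mathbb{R},\mathbb{R})\}$. *)

theory Defs
  imports "HOL-Analysis.Analysis"
begin

definition CRR :: "(real \<Rightarrow> real) set" where
  "CRR = {f. continuous_on UNIV f}"

definition graph :: "(real \<Rightarrow> real) \<Rightarrow> (real \<times> real) set" where
  "graph f = {(x, f x) | x. True}"

definition union_graphs :: "(real \<Rightarrow> real) set \<Rightarrow> (real \<times> real) set" where
  "union_graphs G = (\<Union>g\<in>G. graph g)"

definition complete_family :: "(real \<Rightarrow> real) set \<Rightarrow> bool" where
  "complete_family G \<longleftrightarrow> (\<forall>g\<in>CRR. graph g \<subseteq> union_graphs G \<longrightarrow> g \<in> G)"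

definition connected_family :: "(real \<Rightarrow> real) set \<Rightarrow> bool" where
  "connected_family G \<longleftrightarrow>
     (\<forall>f\<in>G. \<forall>g\<in>G. \<forall>x y. x \<noteq> y \<longrightarrow> (\<exists>h\<in>G. h x = f x \<and> h y = g y))"

definition R_rel :: "(real \<Rightarrow> real) set \<Rightarrow> ((real \<Rightarrow> real) \<times> real set) set" where
  "R_rel G = {(f, E). f \<in> CRR \<and> closed E \<and> (\<exists>g\<in>G. \<forall>x\<in>E. f x = g x)}"

definition E_of :: "(real \<Rightarrow> real) set \<Rightarrow> (real \<Rightarrow> real) set \<Rightarrow> real set set" where
  "E_of G F = {E. closed E \<and> (\<forall>f\<in>F. (f, E) \<in> R_rel G)}"

definition K_of :: "(real \<Rightarrow> real) set \<Rightarrow> real set set set" where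
  "K_of G = {E_of G F | F. F \<subseteq> CRR}"

end

theory Submission
  imports Defs
begin

text \<open>
  The heart of the matter is that for a complete and connected family G, a continuous f
  whose graph over a closed set E lies in the union of G agrees on E with a member of G.
  Completeness makes G closed under pointwise medians and under gluing at a common point;
  with connectedness this lets one join two points of the union close to a member u of G
  by a member of G staying close to u. Now fill each bounded component (a, b) of the
  complement of E with a member of G through (a, f a) and (b, f b) that is almost as close
  to f a on [a, b] as possible, fill the unbounded components with any member of G through
  their endpoint, and keep f on E. By the joining property, the fillers of short gaps near
  a point p of E stay close to f p, so the result is continuous, and by completeness it
  lies in G.

  Consequently each E_G(F) consists of the closed subsets of the set of points where every
  member of F meets the union of G. The functions with a single hole show that every such
  set occurs; conversely, completeness, connectedness and the holes are read off from
  E_G({g}) for g with graph inside the union, for a line through two given points, and for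
  F with E_G(F) the closed sets avoiding a given point.
\<close>

section \<open>Filling the gaps of a closed set\<close>

lemma tendsto_at_right_gap_filling:
  fixes f g :: "real \<Rightarrow> real"
  assumes "p \<in> E" and f: "isCont f p" and g_on_E: "\<And>x. x \<in> E \<Longrightarrow> g x = f x"
    and right_gap: "\<And>r. r > 0 \<Longrightarrow> {p<..<p+r} \<inter> E = {} \<Longrightarrow>
      \<exists>h. isCont h p \<and> h p = f p \<and> (\<forall>y\<in>{p<..<p+r}. g y = h y)"
    and small_gaps: "\<And>\<epsilon>. \<epsilon> > 0 \<Longrightarrow> \<exists>\<delta>>0. \<forall>a\<in>E. \<forall>b\<in>E. \<forall>y.
      p - \<delta> < a \<and> a < y \<and> y < b \<and> b < p + \<delta> \<and> y \<notin> E \<longrightarrow> \<bar>g y - f p\<bar> < \<epsilon>"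
  shows "(g \<longlongrightarrow> f p) (at_right p)"
proof (cases "\<exists>r>0. {p<..<p+r} \<inter> E = {}")
  case True
  then obtain r h where r: "r > 0" and h: "isCont h p" "h p = f p" "\<forall>y\<in>{p<..<p+r}. g y = h y"
    using right_gap by blast
  have "(h \<longlongrightarrow> f p) (at_right p)"
    using h by (metis isCont_def tendsto_mono at_le subset_UNIV)
  moreover have "\<forall>\<^sub>F y in at_right p. h y = g y"
    using eventually_at_right_real[of p "p + r"] h(3) r by (auto elim: eventually_mono)
  ultimately show ?thesis by (rule Lim_transform_eventually)
next
  case False
  show ?thesis
  proof (rule tendstoI)
    fix \<epsilon> :: real assume "\<epsilon> > 0"
    obtain \<delta> where "\<delta> > 0" and \<delta>: "\<forall>a\<in>E. \<forall>b\<in>E. \<forall>y.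
      p - \<delta> < a \<and> a < y \<and> y < b \<and> b < p + \<delta> \<and> y \<notin> E \<longrightarrow> \<bar>g y - f p\<bar> < \<epsilon>"
      using small_gaps[OF \<open>\<epsilon> > 0\<close>] by blast
    obtain d where "d > 0" and d: "\<And>y. \<bar>y - p\<bar> < d \<Longrightarrow> \<bar>f y - f p\<bar> < \<epsilon>"
      using f \<open>\<epsilon> > 0\<close> unfolding continuous_at_eps_delta dist_real_def by blast
    obtain e where e: "e \<in> E" "p < e" "e < p + min \<delta> d"
      using False \<open>\<delta> > 0\<close> \<open>d > 0\<close> by (fastforce dest: spec[of _ "min \<delta> d"])
    have "\<bar>g y - f p\<bar> < \<epsilon>" if "y \<in> {p<..<e}" for y
    proof (cases "y \<in> E")
      case True
      then show ?thesis using d[of y] g_on_E that e by auto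
    next
      case False
      then show ?thesis using \<delta> \<open>p \<in> E\<close> e that \<open>\<delta> > 0\<close> by auto
    qed
    then show "\<forall>\<^sub>F y in at_right p. dist (g y) (f p) < \<epsilon>"
      using eventually_at_right_real[OF e(2)] by (auto simp: dist_real_def elim: eventually_mono)
  qed
qed

lemma tendsto_at_left_gap_filling:
  fixes f g :: "real \<Rightarrow> real"
  assumes "p \<in> E" and f: "isCont f p" and g_on_E: "\<And>x. x \<in> E \<Longrightarrow> g x = f x"
    and left_gap: "\<And>r. r > 0 \<Longrightarrow> {p-r<..<p} \<inter> E = {} \<Longrightarrow>
      \<exists>h. isCont h p \<and> h p = f p \<and> (\<forall>y\<in>{p-r<..<p}. g y = h y)"
    and small_gaps: "\<And>\<epsilon>. \<epsilon> > 0 \<Longrightarrow> \<exists>\<delta>>0. \<forall>a\<in>E. \<forall>b\<in>E. \<forall>y.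
      p - \<delta> < a \<and> a < y \<and> y < b \<and> b < p + \<delta> \<and> y \<notin> E \<longrightarrow> \<bar>g y - f p\<bar> < \<epsilon>"
  shows "(g \<longlongrightarrow> f p) (at_left p)"
proof -
  have "((\<lambda>y. g (- y)) \<longlongrightarrow> f (- (- p))) (at_right (- p))"
  proof (rule tendsto_at_right_gap_filling[where E = "uminus ` E"])
    show "- p \<in> uminus ` E" using assms(1) by simp
    show "isCont (\<lambda>y. f (- y)) (- p)"
      using f by (auto intro: continuous_intros isCont_o2[where f=uminus])
    show "g (- x) = f (- x)" if "x \<in> uminus ` E" for x using g_on_E that by auto
    show "\<exists>h. isCont h (- p) \<and> h (- p) = f (- (- p)) \<and> (\<forall>y\<in>{- p<..<- p + r}. g (- y) = h y)"
      if r: "r > 0" and gap: "{- p<..<- p + r} \<inter> uminus ` E = {}" for r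
    proof -
      have "{p-r<..<p} \<inter> E = {}" using gap by (force simp: image_iff)
      then obtain h where "isCont h p" "h p = f p" "\<forall>y\<in>{p-r<..<p}. g y = h y"
        using left_gap[OF r] by blast
      then show ?thesis
        by (intro exI[of _ "\<lambda>y. h (- y)"]) (auto intro: isCont_o2[where f=uminus])
    qed
    show "\<exists>\<delta>>0. \<forall>a\<in>uminus ` E. \<forall>b\<in>uminus ` E. \<forall>y. - p - \<delta> < a \<and> a < y \<and> y < b \<and> b < - p + \<delta>
        \<and> y \<notin> uminus ` E \<longrightarrow> \<bar>g (- y) - f (- (- p))\<bar> < \<epsilon>" if \<epsilon>: "\<epsilon> > 0" for \<epsilon>
    proof -
      obtain \<delta> where "\<delta> > 0" and \<delta>: "\<forall>a\<in>E. \<forall>b\<in>E. \<forall>y.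
        p - \<delta> < a \<and> a < y \<and> y < b \<and> b < p + \<delta> \<and> y \<notin> E \<longrightarrow> \<bar>g y - f p\<bar> < \<epsilon>"
        using small_gaps[OF \<epsilon>] by blast
      have "\<bar>g (- y) - f p\<bar> < \<epsilon>" if "a \<in> E" "b \<in> E" "- p - \<delta> < - a" "- a < y" "y < - b"
        "- b < - p + \<delta>" "- y \<notin> E" for a b y
        using \<delta>[rule_format, of b a "- y"] that by auto
      then show ?thesis using \<open>\<delta> > 0\<close> by (intro exI[of _ \<delta>]) (auto simp: image_iff, metis minus_minus)
    qed
  qed
  then show ?thesis by (simp add: filterlim_at_left_to_right)
qed

lemma isCont_gap_filling:
  fixes f g :: "real \<Rightarrow> real"
  assumes "p \<in> E" and f: "isCont f p" and g_on_E: "\<And>x. x \<in> E \<Longrightarrow> g x = f x"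
    and right_gap: "\<And>r. r > 0 \<Longrightarrow> {p<..<p+r} \<inter> E = {} \<Longrightarrow>
      \<exists>h. isCont h p \<and> h p = f p \<and> (\<forall>y\<in>{p<..<p+r}. g y = h y)"
    and left_gap: "\<And>r. r > 0 \<Longrightarrow> {p-r<..<p} \<inter> E = {} \<Longrightarrow>
      \<exists>h. isCont h p \<and> h p = f p \<and> (\<forall>y\<in>{p-r<..<p}. g y = h y)"
    and small_gaps: "\<And>\<epsilon>. \<epsilon> > 0 \<Longrightarrow> \<exists>\<delta>>0. \<forall>a\<in>E. \<forall>b\<in>E. \<forall>y.
      p - \<delta> < a \<and> a < y \<and> y < b \<and> b < p + \<delta> \<and> y \<notin> E \<longrightarrow> \<bar>g y - f p\<bar> < \<epsilon>"
  shows "isCont g p"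
proof -
  have "(g \<longlongrightarrow> f p) (at_left p)"
    using assms(1) f g_on_E left_gap small_gaps by (rule tendsto_at_left_gap_filling)
  moreover have "(g \<longlongrightarrow> f p) (at_right p)"
    using assms(1) f g_on_E right_gap small_gaps by (rule tendsto_at_right_gap_filling)
  ultimately have "(g \<longlongrightarrow> f p) (at p)" by (rule filterlim_split_at_real)
  then show ?thesis using g_on_E assms(1) by (simp add: isCont_def)
qed

locale gap_filling =
  fixes E :: "real set" and f :: "real \<Rightarrow> real"
    and V :: "real \<Rightarrow> real \<Rightarrow> real" and \<Phi> :: "real \<Rightarrow> real \<Rightarrow> real \<Rightarrow> real"
  assumes closed_E: "closed E" and E_nonempty: "E \<noteq> {}" and continuous_f: "continuous_on UNIV f"
    and V: "\<And>e. e \<in> E \<Longrightarrow> continuous_on UNIV (V e) \<and> V e e = f e"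
    and \<Phi>: "\<And>a b. a \<in> E \<Longrightarrow> b \<in> E \<Longrightarrow> a < b \<Longrightarrow>
      continuous_on UNIV (\<Phi> a b) \<and> \<Phi> a b a = f a \<and> \<Phi> a b b = f b"
    and \<Phi>_small: "\<And>p \<epsilon>. p \<in> E \<Longrightarrow> \<epsilon> > 0 \<Longrightarrow> \<exists>\<delta>>0. \<forall>a\<in>E. \<forall>b\<in>E.
      p - \<delta> < a \<longrightarrow> a < b \<longrightarrow> b < p + \<delta> \<longrightarrow> (\<forall>t\<in>{a..b}. \<bar>\<Phi> a b t - f p\<bar> < \<epsilon>)"
begin

definition lower :: "real \<Rightarrow> real" where "lower x = Sup (E \<inter> {..x})"

definition upper :: "real \<Rightarrow> real" where "upper x = Inf (E \<inter> {x..})"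

text \<open>
  For x outside E, the component of the complement of E containing x is the open interval
  from lower x to upper x; an end is missing (and the junk value Sup {} or Inf {} is never
  used) when E has no point on that side.
\<close>

definition branch :: "real \<Rightarrow> real \<Rightarrow> real" where
  "branch x = (if E \<inter> {..x} = {} then V (upper x)
     else if E \<inter> {x..} = {} then V (lower x) else \<Phi> (lower x) (upper x))"

definition extension :: "real \<Rightarrow> real" where
  "extension x = (if x \<in> E then f x else branch x x)"

lemma lower:
  assumes "e \<in> E" "e \<le> x"
  shows "lower x \<in> E" "lower x \<le> x" "e \<le> lower x"
proof -
  have bdd: "bdd_above (E \<inter> {..x})" by (rule bdd_aboveI[of _ x]) auto
  have "Sup (E \<inter> {..x}) \<in> E \<inter> {..x}"
    using assms closed_E bdd by (intro closed_contains_Sup) (auto simp: closed_Int)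
  then show "lower x \<in> E" "lower x \<le> x" by (auto simp: lower_def)
  show "e \<le> lower x" using assms bdd unfolding lower_def by (intro cSup_upper) auto
qed

lemma upper:
  assumes "e \<in> E" "x \<le> e"
  shows "upper x \<in> E" "x \<le> upper x" "upper x \<le> e"
proof -
  have bdd: "bdd_below (E \<inter> {x..})" by (rule bdd_belowI[of _ x]) auto
  have "Inf (E \<inter> {x..}) \<in> E \<inter> {x..}"
    using assms closed_E bdd by (intro closed_contains_Inf) (auto simp: closed_Int)
  then show "upper x \<in> E" "x \<le> upper x" by (auto simp: upper_def)
  show "upper x \<le> e" using assms bdd unfolding upper_def by (intro cInf_lower) auto
qed

lemma lower_less:
  assumes "x \<notin> E" "E \<inter> {..x} \<noteq> {}"
  shows "lower x < x"
  using assms lower by (metis disjoint_iff atMost_iff order_le_less)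

lemma upper_greater:
  assumes "x \<notin> E" "E \<inter> {x..} \<noteq> {}"
  shows "x < upper x"
  using assms upper by (metis disjoint_iff atLeast_iff order_le_less)

lemma branch_cases:
  assumes "x \<notin> E"
  obtains (below) "upper x \<in> E" "branch x = V (upper x)" "E \<inter> {..x} = {}"
    | (above) "lower x \<in> E" "branch x = V (lower x)" "E \<inter> {x..} = {}"
    | (between) "lower x \<in> E" "upper x \<in> E" "lower x < upper x"
        "branch x = \<Phi> (lower x) (upper x)" "E \<inter> {..x} \<noteq> {}" "E \<inter> {x..} \<noteq> {}"
proof -
  consider "E \<inter> {..x} = {}" | "E \<inter> {x..} = {}" | "E \<inter> {..x} \<noteq> {}" "E \<inter> {x..} \<noteq> {}"
    by blast
  then show thesis
  proof cases
    case 1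
    obtain e where "e \<in> E" using E_nonempty by blast
    with 1 have "x \<le> e" by fastforce
    with \<open>e \<in> E\<close> show thesis using 1 upper below by (simp add: branch_def)
  next
    case 2
    obtain e where "e \<in> E" using E_nonempty by blast
    with 2 have "e \<le> x" by fastforce
    with \<open>e \<in> E\<close> have "E \<inter> {..x} \<noteq> {}" "lower x \<in> E" using lower by auto
    then show thesis using 2 above by (simp add: branch_def)
  next
    case 3
    then have "lower x < upper x"
      using lower_less[OF assms] upper_greater[OF assms] by fastforce
    then show thesis using 3 lower upper between by (auto simp: branch_def)
  qed
qed

lemma continuous_branch: "x \<notin> E \<Longrightarrow> continuous_on UNIV (branch x)"
  by (cases rule: branch_cases) (auto dest: V \<Phi>)

lemma branch_lower: "x \<notin> E \<Longrightarrow> E \<inter> {..x} \<noteq> {} \<Longrightarrow> branch x (lower x) = f (lower x)"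
  by (cases rule: branch_cases) (auto dest: V \<Phi>)

lemma branch_upper: "x \<notin> E \<Longrightarrow> E \<inter> {x..} \<noteq> {} \<Longrightarrow> branch x (upper x) = f (upper x)"
  by (cases rule: branch_cases) (auto dest: V \<Phi>)

lemma branch_eq_on_gap:
  assumes "{a<..<b} \<inter> E = {}" "x \<in> {a<..<b}" "y \<in> {a<..<b}"
  shows "branch x = branch y"
proof -
  have outside: "e \<le> a \<or> b \<le> e" if "e \<in> E" for e
    using assms(1) that by (auto simp: disjoint_iff not_le)
  have "E \<inter> {..x} = E \<inter> {..y}" "E \<inter> {x..} = E \<inter> {y..}"
    using assms(2,3) by (force dest: outside)+
  then show ?thesis unfolding branch_def lower_def upper_def by simp
qed

lemma extension_on_gap:
  assumes "{a<..<b} \<inter> E = {}" "x \<in> {a<..<b}" "y \<in> {a<..<b}"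
  shows "extension y = branch x y"
  using assms branch_eq_on_gap[OF assms] by (auto simp: extension_def)

lemma extension_right_gap:
  assumes "p \<in> E" "r > 0" "{p<..<p+r} \<inter> E = {}"
  shows "\<exists>h. isCont h p \<and> h p = f p \<and> (\<forall>y\<in>{p<..<p+r}. extension y = h y)"
proof -
  define x where "x = p + r/2"
  have "x \<in> {p<..<p+r}" using assms(2) by (simp add: x_def)
  then have x: "x \<in> {p<..<p+r}" "x \<notin> E" using assms(3) by blast+
  have "lower x \<in> E" "p \<le> lower x" "lower x \<le> x" using lower[OF assms(1), of x] x by auto
  moreover have "lower x \<notin> {p<..<p+r}" using \<open>lower x \<in> E\<close> assms(3) by blast
  ultimately have "lower x = p" using x by auto
  then have "branch x p = f p"
    using branch_lower[OF x(2)] x assms(1) by force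
  moreover have "isCont (branch x) p"
    using continuous_branch[OF x(2)] by (simp add: continuous_on_eq_continuous_at)
  moreover have "\<forall>y\<in>{p<..<p+r}. extension y = branch x y"
    using extension_on_gap[OF assms(3) x(1)] by blast
  ultimately show ?thesis by blast
qed

lemma extension_left_gap:
  assumes "p \<in> E" "r > 0" "{p-r<..<p} \<inter> E = {}"
  shows "\<exists>h. isCont h p \<and> h p = f p \<and> (\<forall>y\<in>{p-r<..<p}. extension y = h y)"
proof -
  define x where "x = p - r/2"
  have "x \<in> {p-r<..<p}" using assms(2) by (simp add: x_def)
  then have x: "x \<in> {p-r<..<p}" "x \<notin> E" using assms(3) by blast+
  have "upper x \<in> E" "upper x \<le> p" "x \<le> upper x" using upper[OF assms(1), of x] x by auto
  moreover have "upper x \<notin> {p-r<..<p}" using \<open>upper x \<in> E\<close> assms(3) by blast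
  ultimately have "upper x = p" using x by auto
  then have "branch x p = f p"
    using branch_upper[OF x(2)] x assms(1) by force
  moreover have "isCont (branch x) p"
    using continuous_branch[OF x(2)] by (simp add: continuous_on_eq_continuous_at)
  moreover have "\<forall>y\<in>{p-r<..<p}. extension y = branch x y"
    using extension_on_gap[OF assms(3) x(1)] by blast
  ultimately show ?thesis by blast
qed

lemma extension_small_gaps:
  assumes "p \<in> E" "\<epsilon> > 0"
  shows "\<exists>\<delta>>0. \<forall>a\<in>E. \<forall>b\<in>E. \<forall>y.
    p - \<delta> < a \<and> a < y \<and> y < b \<and> b < p + \<delta> \<and> y \<notin> E \<longrightarrow> \<bar>extension y - f p\<bar> < \<epsilon>"
proof -
  obtain \<delta> where "\<delta> > 0" and \<delta>: "\<forall>a\<in>E. \<forall>b\<in>E.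
      p - \<delta> < a \<longrightarrow> a < b \<longrightarrow> b < p + \<delta> \<longrightarrow> (\<forall>t\<in>{a..b}. \<bar>\<Phi> a b t - f p\<bar> < \<epsilon>)"
    using \<Phi>_small[OF assms] by blast
  have "\<bar>extension y - f p\<bar> < \<epsilon>"
    if "a \<in> E" "b \<in> E" "p - \<delta> < a" "a < y" "y < b" "b < p + \<delta>" "y \<notin> E" for a b y
  proof -
    have "E \<inter> {..y} \<noteq> {}" "E \<inter> {y..} \<noteq> {}" using that by auto
    then have "extension y = \<Phi> (lower y) (upper y) y \<and> lower y < upper y"
      using \<open>y \<notin> E\<close> by (cases rule: branch_cases[OF \<open>y \<notin> E\<close>]) (auto simp: extension_def)
    moreover have "lower y \<in> E" "a \<le> lower y" "lower y \<le> y" using lower[of a y] that by auto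
    moreover have "upper y \<in> E" "upper y \<le> b" "y \<le> upper y" using upper[of b y] that by auto
    ultimately show ?thesis using \<delta> that by auto
  qed
  then show ?thesis using \<open>\<delta> > 0\<close> by blast
qed

lemma continuous_extension: "continuous_on UNIV extension"
proof (intro continuous_at_imp_continuous_on ballI)
  fix x :: real
  show "isCont extension x"
  proof (cases "x \<in> E")
    case True
    show ?thesis
    proof (rule isCont_gap_filling[OF True])
      show "isCont f x" using continuous_f by (simp add: continuous_on_eq_continuous_at)
      show "extension y = f y" if "y \<in> E" for y using that by (simp add: extension_def)
    qed (use True extension_right_gap extension_left_gap extension_small_gaps in blast)+
  next
    case False
    obtain r where "r > 0" "ball x r \<subseteq> - E"
      using False closed_E by (metis ComplI open_Compl open_contains_ball)
    moreover have "{x-r<..<x+r} \<subseteq> ball x r" by (auto simp: dist_real_def)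
    ultimately have gap: "{x-r<..<x+r} \<inter> E = {}" "x \<in> {x-r<..<x+r}" by auto
    have "\<forall>\<^sub>F y in nhds x. branch x y = extension y"
      using eventually_nhds_in_open[OF _ gap(2)] extension_on_gap[OF gap(1,2)]
      by (auto elim: eventually_mono)
    moreover have "isCont (branch x) x"
      using continuous_branch[OF False] by (simp add: continuous_on_eq_continuous_at)
    ultimately show ?thesis using isCont_cong by blast
  qed
qed

end

section \<open>Complete and connected families\<close>

lemma mem_union_graphs [simp]: "(x, y) \<in> union_graphs G \<longleftrightarrow> (\<exists>g\<in>G. g x = y)"
  by (auto simp: union_graphs_def graph_def)

lemma complete_familyD:
  assumes "complete_family G" "continuous_on UNIV h" "\<And>t. \<exists>g\<in>G. g t = h t"
  shows "h \<in> G"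
  using assms unfolding complete_family_def CRR_def by (auto simp: graph_def)

lemma CRR_continuous: "G \<subseteq> CRR \<Longrightarrow> g \<in> G \<Longrightarrow> continuous_on UNIV g"
  by (auto simp: CRR_def)

definition median :: "real \<Rightarrow> real \<Rightarrow> real \<Rightarrow> real" where
  "median x y z = max (min x y) (min (max x y) z)"

lemma median_cases: "median x y z = x \<or> median x y z = y \<or> median x y z = z"
  by (auto simp: median_def min_def max_def)

lemma median_between: "min x y \<le> median x y z" "median x y z \<le> max x y"
  by (auto simp: median_def)

lemma median_eq_right: "median x y y = y" and median_eq_left: "median x y x = x"
  by (auto simp: median_def)

lemma median_mem:
  assumes "G \<subseteq> CRR" "complete_family G" "u \<in> G" "v \<in> G" "w \<in> G"
  shows "(\<lambda>t. median (u t) (v t) (w t)) \<in> G"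
proof (rule complete_familyD[OF assms(2)])
  have [continuous_intros]: "continuous_on UNIV u" "continuous_on UNIV v" "continuous_on UNIV w"
    using assms CRR_continuous by auto
  show "continuous_on UNIV (\<lambda>t. median (u t) (v t) (w t))"
    unfolding median_def by (intro continuous_intros)
  show "\<exists>g\<in>G. g t = median (u t) (v t) (w t)" for t
    using median_cases[of "u t" "v t" "w t"] assms by metis
qed

lemma glue_mem:
  assumes "G \<subseteq> CRR" "complete_family G" "u \<in> G" "v \<in> G" "u c = v c"
  shows "(\<lambda>t. if t \<le> c then u t else v t) \<in> G"
proof (rule complete_familyD[OF assms(2)])
  have "continuous_on UNIV u" "continuous_on UNIV v"
    using assms CRR_continuous by auto
  then show "continuous_on UNIV (\<lambda>t. if t \<le> c then u t else v t)"
    using assms(5) by (intro continuous_on_cases_le[where h="\<lambda>t. t", simplified])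
      (auto intro: continuous_on_subset)
  show "\<exists>g\<in>G. g t = (if t \<le> c then u t else v t)" for t
    using assms by auto
qed

lemma join_between:
  assumes "G \<subseteq> CRR" "complete_family G" "connected_family G" "u \<in> G" "v \<in> G" "a \<noteq> c"
  obtains \<psi> where "\<psi> \<in> G" "\<psi> a = v a" "\<psi> c = u c"
    "\<And>t. min (u t) (v t) \<le> \<psi> t \<and> \<psi> t \<le> max (u t) (v t)"
proof -
  obtain w where w: "w \<in> G" "w a = v a" "w c = u c"
    using assms unfolding connected_family_def by metis
  show thesis
  proof
    show "(\<lambda>t. median (u t) (v t) (w t)) \<in> G" using median_mem assms w by blast
  qed (use w median_between in \<open>auto simp: median_eq_left median_eq_right\<close>)
qed

lemma between_abs_less:
  fixes x y z c e :: real
  assumes "min x y \<le> z \<and> z \<le> max x y" "\<bar>x - c\<bar> < e" "\<bar>y - c\<bar> < e"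
  shows "\<bar>z - c\<bar> < e"
  using assms by (auto simp: min_def max_def abs_less_iff split: if_splits)

lemma continuous_on_UNIV_eps:
  fixes g :: "real \<Rightarrow> real"
  assumes "continuous_on UNIV g" "\<bar>g x - c\<bar> < e"
  obtains d where "d > 0" "\<And>t. \<bar>t - x\<bar> < d \<Longrightarrow> \<bar>g t - c\<bar> < e"
proof -
  have "isCont g x" using assms(1) by (simp add: continuous_on_eq_continuous_at)
  moreover have "e - \<bar>g x - c\<bar> > 0" using assms(2) by simp
  ultimately obtain d where "d > 0" and d: "\<And>t. \<bar>t - x\<bar> < d \<Longrightarrow> \<bar>g t - g x\<bar> < e - \<bar>g x - c\<bar>"
    unfolding continuous_at_eps_delta dist_real_def by blast
  show thesis
  proof (rule that[OF \<open>d > 0\<close>])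
    fix t assume "\<bar>t - x\<bar> < d"
    with d show "\<bar>g t - c\<bar> < e" by fastforce
  qed
qed

lemma join_close:
  assumes G: "G \<subseteq> CRR" "complete_family G" "connected_family G"
    and "u \<in> G" "v \<in> G" "w \<in> G" "a < b"
    and u: "\<forall>t\<in>{a..b}. \<bar>u t - c\<bar> < \<epsilon>" and va: "\<bar>v a - c\<bar> < \<epsilon>" and wb: "\<bar>w b - c\<bar> < \<epsilon>"
  obtains \<phi> where "\<phi> \<in> G" "\<phi> a = v a" "\<phi> b = w b" "\<forall>t\<in>{a..b}. \<bar>\<phi> t - c\<bar> < \<epsilon>"
proof -
  obtain da where "da > 0" and da: "\<And>t. \<bar>t - a\<bar> < da \<Longrightarrow> \<bar>v t - c\<bar> < \<epsilon>"
    using continuous_on_UNIV_eps[OF CRR_continuous[OF G(1) \<open>v \<in> G\<close>] va] by blast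
  obtain db where "db > 0" and db: "\<And>t. \<bar>t - b\<bar> < db \<Longrightarrow> \<bar>w t - c\<bar> < \<epsilon>"
    using continuous_on_UNIV_eps[OF CRR_continuous[OF G(1) \<open>w \<in> G\<close>] wb] by blast
  define a' where "a' = min (a + da/2) ((a + b)/2)"
  define b' where "b' = max (b - db/2) ((a + b)/2)"
  have a'b': "a < a'" "a' \<le> b'" "b' < b"
    using \<open>a < b\<close> \<open>da > 0\<close> \<open>db > 0\<close> by (auto simp: a'_def b'_def)
  obtain \<psi>1 where \<psi>1: "\<psi>1 \<in> G" "\<psi>1 a = v a" "\<psi>1 a' = u a'"
      "\<And>t. min (u t) (v t) \<le> \<psi>1 t \<and> \<psi>1 t \<le> max (u t) (v t)"
    using join_between[OF G \<open>u \<in> G\<close> \<open>v \<in> G\<close>, of a a'] a'b' by auto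
  obtain \<psi>2 where \<psi>2: "\<psi>2 \<in> G" "\<psi>2 b = w b" "\<psi>2 b' = u b'"
      "\<And>t. min (u t) (w t) \<le> \<psi>2 t \<and> \<psi>2 t \<le> max (u t) (w t)"
    using join_between[OF G \<open>u \<in> G\<close> \<open>w \<in> G\<close>, of b b'] a'b' by auto
  \<comment> \<open>Leave v for u right after a and u for w right before b: pointwise between u and v
    (or w), the joins stay close to c where v (or w) does.\<close>
  define \<phi> where "\<phi> t = (if t \<le> a' then \<psi>1 t else if t \<le> b' then u t else \<psi>2 t)" for t
  have "(\<lambda>t. if t \<le> b' then u t else \<psi>2 t) \<in> G"
    using glue_mem[OF G(1,2) \<open>u \<in> G\<close> \<psi>2(1)] \<psi>2(3) by simp
  then have "\<phi> \<in> G"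
    unfolding \<phi>_def using glue_mem[OF G(1,2) \<psi>1(1)] \<psi>1(3) a'b' by simp
  moreover have "\<bar>\<phi> t - c\<bar> < \<epsilon>" if t: "t \<in> {a..b}" for t
  proof -
    consider "t \<le> a'" | "a' < t" "t \<le> b'" | "b' < t" by linarith
    then show ?thesis
    proof cases
      case 1
      then have "\<bar>v t - c\<bar> < \<epsilon>" using da t \<open>da > 0\<close> by (simp add: a'_def)
      then show ?thesis using 1 between_abs_less[OF \<psi>1(4)] u t by (simp add: \<phi>_def)
    next
      case 2
      then show ?thesis using u t a'b' by (simp add: \<phi>_def)
    next
      case 3
      then have "\<bar>w t - c\<bar> < \<epsilon>" using db t \<open>db > 0\<close> by (simp add: b'_def)
      then show ?thesis using 3 a'b' between_abs_less[OF \<psi>2(4)] u t by (simp add: \<phi>_def)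
    qed
  qed
  moreover have "\<phi> a = v a" "\<phi> b = w b" using \<psi>1(2) \<psi>2(2) a'b' by (auto simp: \<phi>_def)
  ultimately show thesis using that by blast
qed

lemma local_join:
  assumes G: "G \<subseteq> CRR" "complete_family G" "connected_family G"
    and "u \<in> G" "\<epsilon> > 0"
  obtains \<delta> where "\<delta> > 0"
    "\<And>a b v w. v \<in> G \<Longrightarrow> w \<in> G \<Longrightarrow> p - \<delta> < a \<Longrightarrow> a < b \<Longrightarrow> b < p + \<delta> \<Longrightarrow>
      \<bar>v a - u p\<bar> < \<delta> \<Longrightarrow> \<bar>w b - u p\<bar> < \<delta> \<Longrightarrow>
      \<exists>\<phi>\<in>G. \<phi> a = v a \<and> \<phi> b = w b \<and> (\<forall>t\<in>{a..b}. \<bar>\<phi> t - u p\<bar> < \<epsilon>)"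
proof -
  obtain d where "d > 0" and d: "\<And>t. \<bar>t - p\<bar> < d \<Longrightarrow> \<bar>u t - u p\<bar> < \<epsilon>"
    using continuous_on_UNIV_eps[OF CRR_continuous[OF G(1) \<open>u \<in> G\<close>], of p "u p" \<epsilon>] \<open>\<epsilon> > 0\<close>
    by auto
  have "\<exists>\<phi>\<in>G. \<phi> a = v a \<and> \<phi> b = w b \<and> (\<forall>t\<in>{a..b}. \<bar>\<phi> t - u p\<bar> < \<epsilon>)"
    if vw: "v \<in> G" "w \<in> G" and ab: "p - min d \<epsilon> < a" "a < b" "b < p + min d \<epsilon>"
      and ends: "\<bar>v a - u p\<bar> < min d \<epsilon>" "\<bar>w b - u p\<bar> < min d \<epsilon>" for a b v w
  proof -
    have "\<forall>t\<in>{a..b}. \<bar>u t - u p\<bar> < \<epsilon>" using d ab by auto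
    moreover have "\<bar>v a - u p\<bar> < \<epsilon>" "\<bar>w b - u p\<bar> < \<epsilon>" using ends by auto
    ultimately obtain \<phi> where "\<phi> \<in> G" "\<phi> a = v a" "\<phi> b = w b" "\<forall>t\<in>{a..b}. \<bar>\<phi> t - u p\<bar> < \<epsilon>"
      using join_close[OF G \<open>u \<in> G\<close> vw ab(2)] by blast
    then show ?thesis by blast
  qed
  moreover have "min d \<epsilon> > 0" using \<open>d > 0\<close> \<open>\<epsilon> > 0\<close> by simp
  ultimately show thesis using that by blast
qed

lemma near_minimal_deviation:
  fixes B :: "('a \<Rightarrow> real) set"
  assumes "B \<noteq> {}" "\<eta> > 0"
  obtains \<phi> where "\<phi> \<in> B"
    "\<And>\<psi> e. \<psi> \<in> B \<Longrightarrow> \<forall>t\<in>S. \<bar>\<psi> t - c\<bar> \<le> e \<Longrightarrow> \<forall>t\<in>S. \<bar>\<phi> t - c\<bar> \<le> e + \<eta>"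
proof -
  define M where "M = {e. \<exists>\<psi>\<in>B. \<forall>t\<in>S. \<bar>\<psi> t - c\<bar> \<le> e}"
  consider "M = {}" | "S = {}" | "M \<noteq> {}" "S \<noteq> {}" by blast
  then show thesis
  proof cases
    case 1
    obtain \<phi> where "\<phi> \<in> B" using assms(1) by blast
    with 1 show thesis using that[of \<phi>] by (auto simp: M_def)
  next
    case 2
    then show thesis using assms(1) that by auto
  next
    case 3
    have "bdd_below M"
      using 3(2) by (intro bdd_belowI[of _ 0]) (fastforce simp: M_def intro: order_trans)
    then obtain e0 where "e0 \<in> M" "e0 < Inf M + \<eta>"
      using 3(1) \<open>\<eta> > 0\<close> cInf_less_iff[of M "Inf M + \<eta>"] by auto
    then obtain \<phi> where \<phi>: "\<phi> \<in> B" "\<forall>t\<in>S. \<bar>\<phi> t - c\<bar> \<le> e0" by (auto simp: M_def)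
    show thesis
    proof (rule that[OF \<phi>(1)])
      fix \<psi> e assume "\<psi> \<in> B" "\<forall>t\<in>S. \<bar>\<psi> t - c\<bar> \<le> e"
      then have "Inf M \<le> e" using \<open>bdd_below M\<close> by (intro cInf_lower) (auto simp: M_def)
      then show "\<forall>t\<in>S. \<bar>\<phi> t - c\<bar> \<le> e + \<eta>" using \<phi>(2) \<open>e0 < Inf M + \<eta>\<close> by force
    qed
  qed
qed

definition anchor :: "(real \<Rightarrow> real) set \<Rightarrow> (real \<Rightarrow> real) \<Rightarrow> real \<Rightarrow> real \<Rightarrow> real" where
  "anchor G f e = (SOME v. v \<in> G \<and> v e = f e)"

text \<open>
  A best filler of the gap (a, b) need not exist, so \<open>bridge G f a b\<close> is only within
  b - a of the optimal uniform distance from f a; this slack vanishes on short gaps.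
\<close>

definition bridge :: "(real \<Rightarrow> real) set \<Rightarrow> (real \<Rightarrow> real) \<Rightarrow> real \<Rightarrow> real \<Rightarrow> real \<Rightarrow> real" where
  "bridge G f a b = (SOME \<phi>. \<phi> \<in> G \<and> \<phi> a = f a \<and> \<phi> b = f b \<and>
     (\<forall>\<psi>\<in>G. \<forall>e. \<psi> a = f a \<and> \<psi> b = f b \<and> (\<forall>t\<in>{a..b}. \<bar>\<psi> t - f a\<bar> \<le> e) \<longrightarrow>
        (\<forall>t\<in>{a..b}. \<bar>\<phi> t - f a\<bar> \<le> e + (b - a))))"

lemma anchor:
  assumes "(e, f e) \<in> union_graphs G"
  shows "anchor G f e \<in> G" "anchor G f e e = f e"
proof -
  have "\<exists>v. v \<in> G \<and> v e = f e" using assms by auto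
  from someI_ex[OF this] show "anchor G f e \<in> G" "anchor G f e e = f e"
    by (auto simp: anchor_def)
qed

lemma bridge:
  assumes "connected_family G" "(a, f a) \<in> union_graphs G" "(b, f b) \<in> union_graphs G" "a < b"
  shows "bridge G f a b \<in> G" "bridge G f a b a = f a" "bridge G f a b b = f b"
    and "\<And>\<psi> e. \<psi> \<in> G \<Longrightarrow> \<psi> a = f a \<Longrightarrow> \<psi> b = f b \<Longrightarrow> \<forall>t\<in>{a..b}. \<bar>\<psi> t - f a\<bar> \<le> e \<Longrightarrow>
      \<forall>t\<in>{a..b}. \<bar>bridge G f a b t - f a\<bar> \<le> e + (b - a)"
proof -
  obtain v w where "v \<in> G" "v a = f a" "w \<in> G" "w b = f b" using assms(2,3) by auto
  then obtain h where "h \<in> G" "h a = f a" "h b = f b"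
    using assms(1,4) unfolding connected_family_def by (metis less_irrefl)
  then have ne: "{\<phi>\<in>G. \<phi> a = f a \<and> \<phi> b = f b} \<noteq> {}" by blast
  obtain \<phi> where "\<phi> \<in> {\<phi>\<in>G. \<phi> a = f a \<and> \<phi> b = f b}"
    "\<And>\<psi> e. \<psi> \<in> {\<phi>\<in>G. \<phi> a = f a \<and> \<phi> b = f b} \<Longrightarrow> \<forall>t\<in>{a..b}. \<bar>\<psi> t - f a\<bar> \<le> e \<Longrightarrow>
      \<forall>t\<in>{a..b}. \<bar>\<phi> t - f a\<bar> \<le> e + (b - a)"
    using near_minimal_deviation[OF ne, of "b - a" "{a..b}" "f a"] assms(4) by auto
  then have "\<exists>\<phi>. \<phi> \<in> G \<and> \<phi> a = f a \<and> \<phi> b = f b \<and>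
     (\<forall>\<psi>\<in>G. \<forall>e. \<psi> a = f a \<and> \<psi> b = f b \<and> (\<forall>t\<in>{a..b}. \<bar>\<psi> t - f a\<bar> \<le> e) \<longrightarrow>
        (\<forall>t\<in>{a..b}. \<bar>\<phi> t - f a\<bar> \<le> e + (b - a)))" by blast
  from someI_ex[OF this] show "bridge G f a b \<in> G" "bridge G f a b a = f a" "bridge G f a b b = f b"
    "\<And>\<psi> e. \<psi> \<in> G \<Longrightarrow> \<psi> a = f a \<Longrightarrow> \<psi> b = f b \<Longrightarrow> \<forall>t\<in>{a..b}. \<bar>\<psi> t - f a\<bar> \<le> e \<Longrightarrow>
      \<forall>t\<in>{a..b}. \<bar>bridge G f a b t - f a\<bar> \<le> e + (b - a)"
    unfolding bridge_def by blast+
qed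

lemma bridge_small:
  assumes G: "G \<subseteq> CRR" "complete_family G" "connected_family G"
    and f: "continuous_on UNIV f" and covered: "\<And>x. x \<in> E \<Longrightarrow> (x, f x) \<in> union_graphs G"
    and "p \<in> E" "\<epsilon> > 0"
  shows "\<exists>\<delta>>0. \<forall>a\<in>E. \<forall>b\<in>E. p - \<delta> < a \<longrightarrow> a < b \<longrightarrow> b < p + \<delta> \<longrightarrow>
    (\<forall>t\<in>{a..b}. \<bar>bridge G f a b t - f p\<bar> < \<epsilon>)"
proof -
  note anchor_p = anchor[where f=f, OF covered[OF \<open>p \<in> E\<close>]]
  obtain \<delta>1 where "\<delta>1 > 0" and join: "\<And>a b v w. v \<in> G \<Longrightarrow> w \<in> G \<Longrightarrow>
      p - \<delta>1 < a \<Longrightarrow> a < b \<Longrightarrow> b < p + \<delta>1 \<Longrightarrow> \<bar>v a - f p\<bar> < \<delta>1 \<Longrightarrow> \<bar>w b - f p\<bar> < \<delta>1 \<Longrightarrow>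
      \<exists>\<phi>\<in>G. \<phi> a = v a \<and> \<phi> b = w b \<and> (\<forall>t\<in>{a..b}. \<bar>\<phi> t - f p\<bar> < \<epsilon>/4)"
    using local_join[OF G anchor_p(1), of "\<epsilon>/4" p] anchor_p(2) \<open>\<epsilon> > 0\<close> by auto
  obtain \<delta>f where "\<delta>f > 0" and \<delta>f: "\<And>t. \<bar>t - p\<bar> < \<delta>f \<Longrightarrow> \<bar>f t - f p\<bar> < min \<delta>1 (\<epsilon>/8)"
    using continuous_on_UNIV_eps[OF f, of p "f p" "min \<delta>1 (\<epsilon>/8)"] \<open>\<delta>1 > 0\<close> \<open>\<epsilon> > 0\<close>
    by auto
  define \<delta> where "\<delta> = min \<delta>1 (min \<delta>f (\<epsilon>/8))"
  have "\<bar>bridge G f a b t - f p\<bar> < \<epsilon>"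
    if ab: "a \<in> E" "b \<in> E" "p - \<delta> < a" "a < b" "b < p + \<delta>" and t: "t \<in> {a..b}" for a b t
  proof -
    note anchor_a = anchor[where f=f, OF covered[OF ab(1)]]
      and anchor_b = anchor[where f=f, OF covered[OF ab(2)]]
    have fa: "\<bar>f a - f p\<bar> < min \<delta>1 (\<epsilon>/8)" and fb: "\<bar>f b - f p\<bar> < min \<delta>1 (\<epsilon>/8)"
      using \<delta>f ab by (auto simp: \<delta>_def)
    moreover have "p - \<delta>1 < a" "b < p + \<delta>1" using ab by (auto simp: \<delta>_def)
    ultimately obtain \<psi> where \<psi>: "\<psi> \<in> G" "\<psi> a = f a" "\<psi> b = f b"
        "\<forall>t\<in>{a..b}. \<bar>\<psi> t - f p\<bar> < \<epsilon>/4"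
      using join[OF anchor_a(1) anchor_b(1), of a b] ab(4) anchor_a(2) anchor_b(2) by auto
    have "\<forall>t\<in>{a..b}. \<bar>\<psi> t - f a\<bar> \<le> 3 * \<epsilon> / 8"
    proof
      fix t assume "t \<in> {a..b}"
      then have "\<bar>\<psi> t - f p\<bar> < \<epsilon>/4" using \<psi>(4) by blast
      with fa show "\<bar>\<psi> t - f a\<bar> \<le> 3 * \<epsilon> / 8" by arith
    qed
    then have "\<bar>bridge G f a b t - f a\<bar> \<le> 3 * \<epsilon> / 8 + (b - a)"
      using bridge[where f=f, OF G(3) covered[OF ab(1)] covered[OF ab(2)] ab(4)] \<psi>(1-3) t
      by blast
    moreover have "b - a < \<epsilon>/4" using ab by (auto simp: \<delta>_def)
    ultimately show ?thesis using fa by arith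
  qed
  moreover have "\<delta> > 0" using \<open>\<delta>1 > 0\<close> \<open>\<delta>f > 0\<close> \<open>\<epsilon> > 0\<close> by (simp add: \<delta>_def)
  ultimately show ?thesis by blast
qed

lemma gap_filling_anchor_bridge:
  assumes G: "G \<subseteq> CRR" "complete_family G" "connected_family G"
    and f: "continuous_on UNIV f" and "closed E" "E \<noteq> {}"
    and covered: "\<And>x. x \<in> E \<Longrightarrow> (x, f x) \<in> union_graphs G"
  shows "gap_filling E f (anchor G f) (bridge G f)"
proof
  show "closed E" "E \<noteq> {}" "continuous_on UNIV f" by fact+
  show "continuous_on UNIV (anchor G f e) \<and> anchor G f e e = f e" if "e \<in> E" for e
    using anchor[where f=f, OF covered[OF that]] CRR_continuous[OF G(1)] by blast
  show "continuous_on UNIV (bridge G f a b) \<and> bridge G f a b a = f a \<and> bridge G f a b b = f b"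
    if "a \<in> E" "b \<in> E" "a < b" for a b
    using bridge[where f=f, OF G(3) covered[OF that(1)] covered[OF that(2)] that(3)] CRR_continuous[OF G(1)]
    by blast
  show "\<exists>\<delta>>0. \<forall>a\<in>E. \<forall>b\<in>E. p - \<delta> < a \<longrightarrow> a < b \<longrightarrow> b < p + \<delta> \<longrightarrow>
      (\<forall>t\<in>{a..b}. \<bar>bridge G f a b t - f p\<bar> < \<epsilon>)" if "p \<in> E" "\<epsilon> > 0" for p \<epsilon>
    using bridge_small[OF G f covered that] .
qed

theorem R_rel_iff_graph_covered:
  assumes G: "G \<subseteq> CRR" "G \<noteq> {}" "complete_family G" "connected_family G"
    and "f \<in> CRR" "closed E"
  shows "(f, E) \<in> R_rel G \<longleftrightarrow> (\<forall>x\<in>E. (x, f x) \<in> union_graphs G)"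
proof
  show "(f, E) \<in> R_rel G \<Longrightarrow> \<forall>x\<in>E. (x, f x) \<in> union_graphs G"
    by (auto simp: R_rel_def)
  assume "\<forall>x\<in>E. (x, f x) \<in> union_graphs G"
  then have covered: "\<And>x. x \<in> E \<Longrightarrow> (x, f x) \<in> union_graphs G" by blast
  have "\<exists>g\<in>G. \<forall>x\<in>E. f x = g x"
  proof (cases "E = {}")
    case True
    then show ?thesis using G(2) by blast
  next
    case False
    interpret gap_filling E f "anchor G f" "bridge G f"
      using gap_filling_anchor_bridge[OF G(1,3,4)] \<open>f \<in> CRR\<close> \<open>closed E\<close> False covered
      by (simp add: CRR_def)
    have "branch x \<in> G" if "x \<notin> E" for x
      using that by (cases rule: branch_cases)
        (auto intro: anchor[where f=f, OF covered] bridge[where f=f, OF G(4) covered covered])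
    then have "extension \<in> G"
      using covered by (intro complete_familyD[OF G(3) continuous_extension])
        (auto simp: extension_def)
    moreover have "\<forall>x\<in>E. f x = extension x" by (simp add: extension_def)
    ultimately show ?thesis by blast
  qed
  then show "(f, E) \<in> R_rel G" using \<open>f \<in> CRR\<close> \<open>closed E\<close> by (simp add: R_rel_def)
qed

section \<open>The families E_G(F)\<close>

definition covered_points :: "(real \<Rightarrow> real) set \<Rightarrow> (real \<Rightarrow> real) set \<Rightarrow> real set" where
  "covered_points G F = {y. \<forall>f\<in>F. (y, f y) \<in> union_graphs G}"

lemma singleton_mem_E_of: "F \<subseteq> CRR \<Longrightarrow> {y} \<in> E_of G F \<longleftrightarrow> y \<in> covered_points G F"
  by (auto simp: E_of_def R_rel_def covered_points_def) (metis subsetD)+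

lemma E_of_eq_closed_subsets:
  assumes "G \<subseteq> CRR" "G \<noteq> {}" "complete_family G" "connected_family G" "F \<subseteq> CRR"
  shows "E_of G F = {E. closed E \<and> E \<subseteq> covered_points G F}"
proof -
  have "E \<in> E_of G F \<longleftrightarrow> closed E \<and> E \<subseteq> covered_points G F" for E
    using R_rel_iff_graph_covered[OF assms(1-4)] assms(5)
    unfolding E_of_def covered_points_def by blast
  then show ?thesis by blast
qed

lemma closed_subsets_eq_covered_points:
  assumes "F \<subseteq> CRR" "E_of G F = {E. closed E \<and> E \<subseteq> X}"
  shows "X = covered_points G F"
proof -
  have "y \<in> X \<longleftrightarrow> {y} \<in> E_of G F" for y using assms(2) by auto
  then show ?thesis using singleton_mem_E_of[OF assms(1)] by blast
qed

lemma graph_diff_union_graphs_eq_singleton: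
  "graph f - union_graphs G = {(x, f x)} \<longleftrightarrow>
     (x, f x) \<notin> union_graphs G \<and> (\<forall>y. y \<noteq> x \<longrightarrow> (y, f y) \<in> union_graphs G)"
  unfolding graph_def by (rule iffI; auto simp del: mem_union_graphs)

lemma E_of_eq_if_K_of_eq:
  assumes "K_of G = {{E. closed E \<and> E \<subseteq> X} | X. True}" "F \<subseteq> CRR"
  shows "E_of G F = {E. closed E \<and> E \<subseteq> covered_points G F}"
proof -
  have "E_of G F \<in> K_of G" using assms(2) by (auto simp: K_of_def)
  then obtain X where "E_of G F = {E. closed E \<and> E \<subseteq> X}" using assms(1) by auto
  with closed_subsets_eq_covered_points[OF assms(2) this] show ?thesis by simp
qed

lemma complete_family_if_K_of_eq:
  assumes "K_of G = {{E. closed E \<and> E \<subseteq> X} | X. True}"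
  shows "complete_family G"
  unfolding complete_family_def
proof (intro ballI impI)
  fix g assume g: "g \<in> CRR" "graph g \<subseteq> union_graphs G"
  then have "covered_points G {g} = UNIV"
    by (auto simp: covered_points_def graph_def simp del: mem_union_graphs)
  then have "UNIV \<in> E_of G {g}" using E_of_eq_if_K_of_eq[OF assms, of "{g}"] g(1) by simp
  then obtain h where "h \<in> G" "\<forall>x. g x = h x" by (auto simp: E_of_def R_rel_def)
  then show "g \<in> G" by (metis ext)
qed

lemma connected_family_if_K_of_eq:
  assumes "K_of G = {{E. closed E \<and> E \<subseteq> X} | X. True}"
  shows "connected_family G"
  unfolding connected_family_def
proof (intro ballI allI impI)
  fix f g x y assume fg: "f \<in> G" "g \<in> G" and "(x::real) \<noteq> y"
  define k where "k t = f x + (g y - f x) * (t - x) / (y - x)" for t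
  have "k \<in> CRR" unfolding CRR_def k_def using \<open>x \<noteq> y\<close> by (auto intro!: continuous_intros)
  have k: "k x = f x" "k y = g y" using \<open>x \<noteq> y\<close> by (simp_all add: k_def)
  then have "{x, y} \<subseteq> covered_points G {k}" using fg by (auto simp: covered_points_def)
  then have "{x, y} \<in> E_of G {k}" using E_of_eq_if_K_of_eq[OF assms, of "{k}"] \<open>k \<in> CRR\<close> by simp
  then obtain h where "h \<in> G" "k x = h x" "k y = h y" by (auto simp: E_of_def R_rel_def)
  then show "\<exists>h\<in>G. h x = f x \<and> h y = g y" using k by metis
qed

lemma single_hole_if_K_of_eq:
  assumes "K_of G = {{E. closed E \<and> E \<subseteq> X} | X. True}"
  shows "\<exists>f\<in>CRR. graph f - union_graphs G = {(x, f x)}"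
proof -
  have "{E. closed E \<and> E \<subseteq> - {x}} \<in> K_of G" unfolding assms by blast
  then obtain F where F: "F \<subseteq> CRR" "E_of G F = {E. closed E \<and> E \<subseteq> - {x}}"
    by (auto simp: K_of_def)
  then have covered: "covered_points G F = - {x}"
    using closed_subsets_eq_covered_points by blast
  then obtain f where "f \<in> F" "(x, f x) \<notin> union_graphs G"
    by (auto simp: covered_points_def simp del: mem_union_graphs)
  moreover have "(y, f y) \<in> union_graphs G" if "y \<noteq> x" for y
    using covered that \<open>f \<in> F\<close> by (auto simp: covered_points_def simp del: mem_union_graphs)
  ultimately have "graph f - union_graphs G = {(x, f x)}"
    by (simp only: graph_diff_union_graphs_eq_singleton) blast
  then show ?thesis using F(1) \<open>f \<in> F\<close> by blast
qed

lemma covered_points_single_hole_functions: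
  assumes holes: "\<And>x. \<exists>f\<in>CRR. graph f - union_graphs G = {(x, f x)}"
  shows "covered_points G {f \<in> CRR. \<exists>x. x \<notin> X \<and> graph f - union_graphs G = {(x, f x)}} = X"
    (is "covered_points G ?F = X")
proof (intro equalityI subsetI)
  fix y assume y: "y \<in> covered_points G ?F"
  show "y \<in> X"
  proof (rule ccontr)
    assume "y \<notin> X"
    obtain f where "f \<in> CRR" "graph f - union_graphs G = {(y, f y)}" using holes by blast
    then show False using y \<open>y \<notin> X\<close>
      by (auto simp: covered_points_def graph_diff_union_graphs_eq_singleton
          simp del: mem_union_graphs)
  qed
next
  fix y assume "y \<in> X"
  have "(y, f y) \<in> union_graphs G" if f: "f \<in> ?F" for f
  proof -
    obtain x where "x \<notin> X" "graph f - union_graphs G = {(x, f x)}" using f by blast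
    then show ?thesis
      using \<open>y \<in> X\<close> graph_diff_union_graphs_eq_singleton[of f G x] by metis
  qed
  then show "y \<in> covered_points G ?F" by (simp add: covered_points_def del: mem_union_graphs)
qed

lemma K_of_eq_if_single_holes:
  assumes "G \<subseteq> CRR" "G \<noteq> {}" "complete_family G" "connected_family G"
    and holes: "\<And>x. \<exists>f\<in>CRR. graph f - union_graphs G = {(x, f x)}"
  shows "K_of G = {{E. closed E \<and> E \<subseteq> X} | X. True}"
proof (intro equalityI subsetI)
  fix K :: "real set set" assume "K \<in> K_of G"
  then show "K \<in> {{E. closed E \<and> E \<subseteq> X} | X. True}"
    using E_of_eq_closed_subsets[OF assms(1-4)] by (auto simp: K_of_def)
next
  fix K :: "real set set" assume "K \<in> {{E. closed E \<and> E \<subseteq> X} | X. True}"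
  then obtain X where X: "K = {E. closed E \<and> E \<subseteq> X}" by blast
  define F where "F = {f \<in> CRR. \<exists>x. x \<notin> X \<and> graph f - union_graphs G = {(x, f x)}}"
  have "F \<subseteq> CRR" by (auto simp: F_def)
  then have "K = E_of G F"
    using E_of_eq_closed_subsets[OF assms(1-4)] covered_points_single_hole_functions[OF holes] X
    by (simp add: F_def)
  then show "K \<in> K_of G" using \<open>F \<subseteq> CRR\<close> by (auto simp: K_of_def)
qed

theorem corollary4p6:
  fixes G :: "(real \<Rightarrow> real) set"
  assumes "G \<subseteq> CRR" and "G \<noteq> {}"
  shows "K_of G = {{E. closed E \<and> E \<subseteq> X} | X. True}
     \<longleftrightarrow> (complete_family G \<and> connected_family G \<and>
          (\<forall>x. \<exists>f\<in>CRR. graph f - union_graphs G = {(x, f x)}))"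
proof
  assume "K_of G = {{E. closed E \<and> E \<subseteq> X} | X. True}"
  then show "complete_family G \<and> connected_family G \<and>
      (\<forall>x. \<exists>f\<in>CRR. graph f - union_graphs G = {(x, f x)})"
    by (intro conjI allI complete_family_if_K_of_eq connected_family_if_K_of_eq
        single_hole_if_K_of_eq)
next
  assume "complete_family G \<and> connected_family G \<and>
      (\<forall>x. \<exists>f\<in>CRR. graph f - union_graphs G = {(x, f x)})"
  then show "K_of G = {{E. closed E \<and> E \<subseteq> X} | X. True}"
    by (intro K_of_eq_if_single_holes[OF assms]) auto
qed

end
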